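(* Let $G$ be a finite undirected graph, $k$ and $\tau\ge1$ integers, and $e=(u,v)\in E(G)$. If $d_\tau(u,G)\le k-1$ or $d_\tau(v,G)\le k-1$, then $\phi_\tau(e,G)\le k$.
   Context: Graphs are finite, simple, undirected and unweighted; paths may repeat vertices and their length is the number of edges. For vertices $v,u$ of a graph $H$, $u$ is $\tau$-hop reachable from $v$ in $H$ if there is a path between them in $H$ of length at most $\tau$. $N_\tau(v,H)$ is the set of vertices $u\ne v$ that are $\tau$-hop reachable from $v$ in $H$, and $d_\tau(v,H)=|N_\tau(v,H)|$. For an edge $e=(u,v)$ of $H$, $\Delta_\tau(e,H)=N_\tau(u,H)\cap N_\tau(v,H)$ and $\mathrm{sup}_\tau(e,H)=|\Delta_\tau(e,H)|$. The $(k,\tau)$-truss of $G$ is the maximal subgraph $G'$ of $G$ such that $\mathrm{sup}_\tau(e,G')\ge k-2$ for every $e\in E(G')$ (supports computed inside $G'$) and no more edges of $G$ can be added while keeping this property; a subgraph is determined by its edge set. The higher-order truss number $\phi_\tau(e,G)$ is the maximum $k$ such that $e$ belongs to the $(k,\tau)$-truss of $G$. *)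

theory Defs
  imports Main
begin

text \<open>A finite simple undirected graph is represented by its edge set: a finite set of
  2-element vertex sets. Subgraphs are edge subsets.\<close>

definition simple_graph :: "'a set set \<Rightarrow> bool" where
  "simple_graph G \<longleftrightarrow> finite G \<and> (\<forall>e\<in>G. card e = 2)"

text \<open>A path (vertices may repeat) given as a nonempty vertex list; its length is the
  number of edges, i.e. length minus one.\<close>
definition is_path :: "'a set set \<Rightarrow> 'a list \<Rightarrow> bool" where
  "is_path H xs \<longleftrightarrow> xs \<noteq> [] \<and> (\<forall>i. Suc i < length xs \<longrightarrow> {xs ! i, xs ! Suc i} \<in> H)"

definition hop_reachable :: "'a set set \<Rightarrow> nat \<Rightarrow> 'a \<Rightarrow> 'a \<Rightarrow> bool" where
  "hop_reachable H \<tau> v u \<longleftrightarrow>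
     (\<exists>xs. is_path H xs \<and> hd xs = v \<and> last xs = u \<and> length xs - 1 \<le> \<tau>)"

definition nbhd :: "nat \<Rightarrow> 'a \<Rightarrow> 'a set set \<Rightarrow> 'a set" where
  "nbhd \<tau> v H = {u. u \<noteq> v \<and> hop_reachable H \<tau> v u}"

definition hdeg :: "nat \<Rightarrow> 'a \<Rightarrow> 'a set set \<Rightarrow> nat" where
  "hdeg \<tau> v H = card (nbhd \<tau> v H)"

definition hsupp :: "nat \<Rightarrow> 'a \<Rightarrow> 'a \<Rightarrow> 'a set set \<Rightarrow> nat" where
  "hsupp \<tau> u v H = card (nbhd \<tau> u H \<inter> nbhd \<tau> v H)"

definition truss_valid :: "int \<Rightarrow> nat \<Rightarrow> 'a set set \<Rightarrow> bool" where
  "truss_valid k \<tau> H \<longleftrightarrow>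
     (\<forall>u v. {u, v} \<in> H \<longrightarrow> int (hsupp \<tau> u v H) \<ge> k - 2)"

definition is_truss :: "'a set set \<Rightarrow> int \<Rightarrow> nat \<Rightarrow> 'a set set \<Rightarrow> bool" where
  "is_truss G k \<tau> H \<longleftrightarrow> H \<subseteq> G \<and> truss_valid k \<tau> H \<and>
     (\<forall>H'. H \<subseteq> H' \<and> H' \<subseteq> G \<and> truss_valid k \<tau> H' \<longrightarrow> H' = H)"

definition truss_number :: "nat \<Rightarrow> 'a set \<Rightarrow> 'a set set \<Rightarrow> int" where
  "truss_number \<tau> e G = (GREATEST k. \<exists>H. is_truss G k \<tau> H \<and> e \<in> H)"

end

theory Submission
  imports Defs
begin

text \<open>Let \<open>H\<close> be a \<open>(k',\<tau>)\<close>-truss of \<open>G\<close> containing the edge \<open>{u, v}\<close>. Every common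
  \<open>\<tau>\<close>-neighbour of \<open>u\<close> and \<open>v\<close> in \<open>H\<close> is a \<open>\<tau>\<close>-neighbour of \<open>u\<close> in \<open>G\<close>, and so is \<open>v\<close>, which
  is not a \<open>\<tau>\<close>-neighbour of itself. Hence \<open>k' - 2 \<le> sup\<^sub>\<tau>(e, H) < d\<^sub>\<tau>(u, G) \<le> k - 1\<close>, and
  symmetrically for \<open>v\<close>. The maximum defining the truss number exists because \<open>G\<close> itself
  is its own \<open>(0,\<tau>)\<close>-truss and all admissible values are bounded by \<open>k\<close>.\<close>

lemma simple_graph_edge_neq:
  assumes "simple_graph G" and "{u, v} \<in> G"
  shows "u \<noteq> v"
  using assms unfolding simple_graph_def by fastforce

lemma simple_graph_finite_vertices:
  assumes "simple_graph G"
  shows "finite (\<Union>G)"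
proof (rule finite_Union)
  show "finite G" using assms unfolding simple_graph_def by blast
  show "finite e" if "e \<in> G" for e
    using assms that unfolding simple_graph_def by (intro card_ge_0_finite) auto
qed

lemma is_path_mono: "H \<subseteq> G \<Longrightarrow> is_path H xs \<Longrightarrow> is_path G xs"
  unfolding is_path_def by blast

lemma is_path_last_in_vertices:
  assumes "is_path H xs" and "last xs \<noteq> hd xs"
  shows "last xs \<in> \<Union>H"
proof -
  have "xs \<noteq> []" using assms(1) unfolding is_path_def by blast
  with assms(2) have "length xs \<ge> 2" by (cases xs; cases "tl xs") auto
  define i where "i = length xs - 2"
  have "Suc i = length xs - 1" using \<open>length xs \<ge> 2\<close> by (simp add: i_def)
  then have last_eq: "xs ! Suc i = last xs" using \<open>xs \<noteq> []\<close> by (simp add: last_conv_nth)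
  have "Suc i < length xs" using \<open>length xs \<ge> 2\<close> by (simp add: i_def)
  then have "{xs ! i, xs ! Suc i} \<in> H" using assms(1) unfolding is_path_def by blast
  then show ?thesis unfolding last_eq by blast
qed

lemma nbhd_subset_vertices: "nbhd \<tau> w H \<subseteq> \<Union>H"
proof
  fix x assume "x \<in> nbhd \<tau> w H"
  then obtain xs where "is_path H xs" "hd xs = w" "last xs = x" "x \<noteq> w"
    unfolding nbhd_def hop_reachable_def by blast
  then show "x \<in> \<Union>H" using is_path_last_in_vertices by metis
qed

lemma finite_nbhd: "simple_graph G \<Longrightarrow> finite (nbhd \<tau> w G)"
  using finite_subset[OF nbhd_subset_vertices simple_graph_finite_vertices] .

lemma hop_reachable_mono:
  assumes "H \<subseteq> G" and "hop_reachable H \<tau> v u"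
  shows "hop_reachable G \<tau> v u"
proof -
  obtain xs where "is_path H xs" "hd xs = v" "last xs = u" "length xs - 1 \<le> \<tau>"
    using assms(2) unfolding hop_reachable_def by blast
  with is_path_mono[OF assms(1)] show ?thesis unfolding hop_reachable_def by blast
qed

lemma nbhd_mono: "H \<subseteq> G \<Longrightarrow> nbhd \<tau> w H \<subseteq> nbhd \<tau> w G"
  unfolding nbhd_def using hop_reachable_mono[of H G] by auto

lemma edge_in_nbhd:
  assumes "{u, v} \<in> H" and "u \<noteq> v" and "\<tau> \<ge> 1"
  shows "v \<in> nbhd \<tau> u H"
proof -
  have "is_path H [u, v]" using assms(1) unfolding is_path_def by (simp add: less_Suc_eq)
  then have "hop_reachable H \<tau> u v"
    using assms(3) unfolding hop_reachable_def by fastforce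
  then show ?thesis using assms(2) unfolding nbhd_def by simp
qed

lemma hsupp_commute: "hsupp \<tau> u v H = hsupp \<tau> v u H"
  unfolding hsupp_def by (simp add: Int_commute)

lemma hsupp_less_hdeg:
  assumes "simple_graph G" and "\<tau> \<ge> 1" and "H \<subseteq> G" and "{u, v} \<in> H"
  shows "hsupp \<tau> u v H < hdeg \<tau> u G"
proof -
  have "{u, v} \<in> G" using assms(3,4) by blast
  then have "u \<noteq> v" by (rule simple_graph_edge_neq[OF assms(1)])
  have "insert v (nbhd \<tau> u H \<inter> nbhd \<tau> v H) \<subseteq> nbhd \<tau> u G"
    using edge_in_nbhd[OF assms(4) \<open>u \<noteq> v\<close> assms(2)] nbhd_mono[OF assms(3)] by blast
  then have "card (insert v (nbhd \<tau> u H \<inter> nbhd \<tau> v H)) \<le> hdeg \<tau> u G"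
    unfolding hdeg_def by (rule card_mono[OF finite_nbhd[OF assms(1)]])
  moreover have "v \<notin> nbhd \<tau> v H" unfolding nbhd_def by simp
  moreover have "finite (nbhd \<tau> u H \<inter> nbhd \<tau> v H)"
    using finite_nbhd[OF assms(1)] nbhd_mono[OF assms(3)] by (meson finite_Int finite_subset)
  ultimately show ?thesis unfolding hsupp_def by simp
qed

lemma is_truss_edge_le_hdeg:
  assumes "simple_graph G" and "\<tau> \<ge> 1" and "is_truss G k \<tau> H" and "{u, v} \<in> H"
  shows "k \<le> int (hdeg \<tau> u G) + 1" and "k \<le> int (hdeg \<tau> v G) + 1"
proof -
  have "H \<subseteq> G" and "truss_valid k \<tau> H"
    using assms(3) unfolding is_truss_def by simp_all
  then have supp: "int (hsupp \<tau> u v H) \<ge> k - 2"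
    using assms(4) unfolding truss_valid_def by simp
  have "{v, u} \<in> H" using assms(4) by (simp add: insert_commute)
  show "k \<le> int (hdeg \<tau> u G) + 1"
    using hsupp_less_hdeg[OF assms(1,2) \<open>H \<subseteq> G\<close> assms(4)] supp by linarith
  show "k \<le> int (hdeg \<tau> v G) + 1"
    using hsupp_less_hdeg[OF assms(1,2) \<open>H \<subseteq> G\<close> \<open>{v, u} \<in> H\<close>] supp
      hsupp_commute[of \<tau> u v H] by linarith
qed

lemma is_truss_zero_self: "is_truss G 0 \<tau> G"
  unfolding is_truss_def truss_valid_def by (simp add: subset_antisym)

lemma Greatest_int_le:
  fixes P :: "int \<Rightarrow> bool"
  assumes "P a" and bounded: "\<And>x. P x \<Longrightarrow> x \<le> b"
  shows "(GREATEST x. P x) \<le> b"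
proof -
  define m where "m = Max {x. P x \<and> a \<le> x}"
  have fin: "finite {x. P x \<and> a \<le> x}"
    by (rule finite_subset[of _ "{a..b}"]) (auto dest: bounded)
  then have m: "m \<in> {x. P x \<and> a \<le> x}"
    unfolding m_def using assms(1) by (intro Max_in) auto
  have maximal: "y \<le> m" if "P y" for y
  proof (cases "a \<le> y")
    case True
    then show ?thesis unfolding m_def using fin that by (intro Max_ge) auto
  next
    case False
    then show ?thesis using m by simp
  qed
  from m have "P m" by simp
  then show ?thesis
    using GreatestI2_order[of P m "\<lambda>x. x \<le> b"] maximal bounded by blast
qed

theorem lemma7:
  fixes G :: "'a set set" and k :: int and \<tau> :: nat and u v :: 'a
  assumes "simple_graph G"
    and "\<tau> \<ge> 1"
    and "{u, v} \<in> G"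
    and "int (hdeg \<tau> u G) \<le> k - 1 \<or> int (hdeg \<tau> v G) \<le> k - 1"
  shows "truss_number \<tau> {u, v} G \<le> k"
  unfolding truss_number_def
proof (rule Greatest_int_le)
  show "\<exists>H. is_truss G 0 \<tau> H \<and> {u, v} \<in> H"
    using is_truss_zero_self assms(3) by blast
  show "k' \<le> k" if "\<exists>H. is_truss G k' \<tau> H \<and> {u, v} \<in> H" for k'
  proof -
    from that obtain H where "is_truss G k' \<tau> H" and "{u, v} \<in> H" by blast
    from is_truss_edge_le_hdeg[OF assms(1,2) this] assms(4) show ?thesis by linarith
  qed
qed

end
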